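(* Let $(M,\cdot)$ be a moving semigroup. Then the family of DIP subsets of $M$ is partition regular: if $X\subseteq M$ is DIP and $Y\subseteq X$, then either $Y$ or $X\setminus Y$ is DIP.
   Context: $\beta M$ is the Stone–Čech compactification of the discrete semigroup $M$ with the usual extended operation; $(M,\cdot)$ is moving if $\beta M\setminus M$ is a subsemigroup of $\beta M$. For a sequence $(x_n)$ in $M$, $\mathrm{FP}(x_n)=\{x_{i_1}\cdots x_{i_k}: k\ge1,\ i_1<\cdots<i_k\}$. A set $A\subseteq M$ is DIP if there is an injective sequence $(x_n)$ in $M$ with $\mathrm{FP}(x_n)\subseteq A$. *)

theory Defs
  imports Main
begin

text \<open>Points of the Stone-Cech compactification beta M of the discrete semigroup M
  (here M = UNIV of a type of class semigroup_mult) are the ultrafilters on M,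
  represented as families of subsets of M. M embeds as the principal ultrafilters.\<close>

definition is_ultrafilter :: "'a set set \<Rightarrow> bool" where
  "is_ultrafilter U \<longleftrightarrow>
     {} \<notin> U \<and> UNIV \<in> U \<and>
     (\<forall>A B. A \<in> U \<and> A \<subseteq> B \<longrightarrow> B \<in> U) \<and>
     (\<forall>A B. A \<in> U \<and> B \<in> U \<longrightarrow> A \<inter> B \<in> U) \<and>
     (\<forall>A. A \<in> U \<or> - A \<in> U)"

definition principal_uf :: "'a \<Rightarrow> 'a set set" where
  "principal_uf x = {A. x \<in> A}"

definition is_principal :: "'a set set \<Rightarrow> bool" where
  "is_principal U \<longleftrightarrow> (\<exists>x. U = principal_uf x)"

definition uf_mult :: "'a::semigroup_mult set set \<Rightarrow> 'a set set \<Rightarrow> 'a set set" where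
  "uf_mult p q = {A. {x. {y. x * y \<in> A} \<in> q} \<in> p}"

definition moving :: "'a::semigroup_mult itself \<Rightarrow> bool" where
  "moving _ \<longleftrightarrow>
     (\<forall>p q :: 'a set set. is_ultrafilter p \<and> \<not> is_principal p \<and>
        is_ultrafilter q \<and> \<not> is_principal q \<longrightarrow> \<not> is_principal (uf_mult p q))"

fun ordprod :: "(nat \<Rightarrow> 'a::semigroup_mult) \<Rightarrow> nat list \<Rightarrow> 'a" where
  "ordprod x [] = undefined"
| "ordprod x [i] = x i"
| "ordprod x (i # j # is) = x i * ordprod x (j # is)"

definition FP :: "(nat \<Rightarrow> 'a::semigroup_mult) \<Rightarrow> 'a set" where
  "FP x = {ordprod x is | is. is \<noteq> [] \<and> sorted_wrt (<) is}"

definition DIP :: "'a::semigroup_mult set \<Rightarrow> bool" where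
  "DIP A \<longleftrightarrow> (\<exists>x :: nat \<Rightarrow> 'a. inj x \<and> FP x \<subseteq> A)"

end

(* Let (x_n) be injective with FP(x_n) \<subseteq> X. The free ultrafilters containing every tail
   FP_from x m form a nonempty closed subset S of beta M. S is closed under the extended product:
   products of free ultrafilters are free because M is moving, and tails are absorbed because
   a * FP_from x k \<subseteq> FP_from x m whenever a \<in> FP_from x m and k is large. By the
   Ellis-Numakura lemma S contains an idempotent e. Then X \<in> e, hence Y \<in> e or X - Y \<in> e,
   and by the Galvin-Glazer argument every member of a free idempotent ultrafilter is DIP. *)

theory Submission
  imports Defs
begin

section \<open>Ultrafilters\<close>

definition proper_filter :: "'a set set \<Rightarrow> bool" where
  "proper_filter F \<longleftrightarrow> {} \<notin> F \<and> UNIV \<in> F \<and> (\<forall>A B. A \<in> F \<and> A \<subseteq> B \<longrightarrow> B \<in> F) \<and>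
     (\<forall>A B. A \<in> F \<and> B \<in> F \<longrightarrow> A \<inter> B \<in> F)"

lemma proper_filterD:
  assumes "proper_filter F"
  shows "{} \<notin> F" "UNIV \<in> F" "A \<in> F \<Longrightarrow> A \<subseteq> B \<Longrightarrow> B \<in> F" "A \<in> F \<Longrightarrow> B \<in> F \<Longrightarrow> A \<inter> B \<in> F"
  using assms unfolding proper_filter_def by blast+

lemma proper_filterI:
  assumes "{} \<notin> F" "UNIV \<in> F" "\<And>A B. A \<in> F \<Longrightarrow> A \<subseteq> B \<Longrightarrow> B \<in> F"
    "\<And>A B. A \<in> F \<Longrightarrow> B \<in> F \<Longrightarrow> A \<inter> B \<in> F"
  shows "proper_filter F"
  unfolding proper_filter_def using assms by auto

lemma is_ultrafilter_iff: "is_ultrafilter U \<longleftrightarrow> proper_filter U \<and> (\<forall>A. A \<in> U \<or> - A \<in> U)"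
  unfolding is_ultrafilter_def proper_filter_def by blast

lemma ultrafilterD:
  assumes "is_ultrafilter U"
  shows "{} \<notin> U" "UNIV \<in> U" "A \<in> U \<Longrightarrow> A \<subseteq> B \<Longrightarrow> B \<in> U"
    "A \<in> U \<Longrightarrow> B \<in> U \<Longrightarrow> A \<inter> B \<in> U" "A \<in> U \<or> - A \<in> U"
  using assms unfolding is_ultrafilter_def by blast+

lemma ultrafilter_Compl_iff: "is_ultrafilter U \<Longrightarrow> - A \<in> U \<longleftrightarrow> A \<notin> U"
  by (metis Compl_disjoint Int_commute ultrafilterD(1,4,5))

lemma ultrafilter_Int_iff: "is_ultrafilter U \<Longrightarrow> A \<inter> B \<in> U \<longleftrightarrow> A \<in> U \<and> B \<in> U"
  by (meson Int_lower1 Int_lower2 ultrafilterD(3,4))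

lemma ultrafilter_subset_imp_eq:
  "is_ultrafilter p \<Longrightarrow> is_ultrafilter q \<Longrightarrow> p \<subseteq> q \<Longrightarrow> p = q"
  by (metis subsetD subsetI subset_antisym ultrafilter_Compl_iff)

lemma not_principal_ultrafilter_iff:
  assumes p: "is_ultrafilter p"
  shows "\<not> is_principal p \<longleftrightarrow> (\<forall>a. - {a} \<in> p)"
proof
  assume "\<not> is_principal p"
  show "\<forall>a. - {a} \<in> p"
  proof (rule ccontr)
    assume "\<not> (\<forall>a. - {a} \<in> p)"
    then obtain a where a: "{a} \<in> p" using ultrafilter_Compl_iff[OF p] by blast
    have "p = principal_uf a"
      unfolding principal_uf_def
    proof (intro set_eqI iffI CollectI)
      fix A assume "A \<in> p"
      then have "A \<inter> {a} \<noteq> {}" using a by (metis p ultrafilterD(1,4))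
      then show "a \<in> A" by blast
    qed (use a ultrafilterD(3)[OF p] in blast)
    with \<open>\<not> is_principal p\<close> show False unfolding is_principal_def by blast
  qed
next
  assume "\<forall>a. - {a} \<in> p"
  then show "\<not> is_principal p"
    unfolding is_principal_def principal_uf_def by auto
qed

lemma proper_filter_Union_chain:
  assumes "subset.chain {G. proper_filter G} \<C>" "\<C> \<noteq> {}"
  shows "proper_filter (\<Union>\<C>)"
proof -
  have filters: "\<And>G. G \<in> \<C> \<Longrightarrow> proper_filter G"
    and total: "\<And>G H. G \<in> \<C> \<Longrightarrow> H \<in> \<C> \<Longrightarrow> G \<subseteq> H \<or> H \<subseteq> G"
    using assms(1) by (auto simp: subset_chain_def)
  show ?thesis
  proof (rule proper_filterI)
    show "{} \<notin> \<Union>\<C>"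
      using filters proper_filterD(1) by blast
    show "UNIV \<in> \<Union>\<C>"
      using filters proper_filterD(2) assms(2) by blast
    show "B \<in> \<Union>\<C>" if "A \<in> \<Union>\<C>" "A \<subseteq> B" for A B
      using that filters proper_filterD(3) by blast
    show "A \<inter> B \<in> \<Union>\<C>" if AB: "A \<in> \<Union>\<C>" "B \<in> \<Union>\<C>" for A B
    proof -
      obtain G H where "G \<in> \<C>" "H \<in> \<C>" "A \<in> G" "B \<in> H" using AB by blast
      then show ?thesis using total[of G H] filters proper_filterD(4) by blast
    qed
  qed
qed

lemma proper_filter_refine:
  assumes F: "proper_filter F" and A: "- A \<notin> F"
  shows "proper_filter {C. \<exists>D\<in>F. D \<inter> A \<subseteq> C}" (is "proper_filter ?G")
proof (rule proper_filterI)
  show "{} \<notin> ?G"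
  proof
    assume "{} \<in> ?G"
    then obtain D where "D \<in> F" "D \<subseteq> - A" by blast
    then show False using A proper_filterD(3)[OF F] by blast
  qed
  show "UNIV \<in> ?G"
    using proper_filterD(2)[OF F] by blast
  show "C \<in> ?G" if "B \<in> ?G" "B \<subseteq> C" for B C
    using that by auto
  show "B \<inter> C \<in> ?G" if BC: "B \<in> ?G" "C \<in> ?G" for B C
  proof -
    obtain D E where DE: "D \<in> F" "E \<in> F" "D \<inter> A \<subseteq> B" "E \<inter> A \<subseteq> C"
      using BC by blast
    then have "D \<inter> E \<in> F" using proper_filterD(4)[OF F] by blast
    moreover have "D \<inter> E \<inter> A \<subseteq> B \<inter> C" using DE by blast
    ultimately show ?thesis by blast
  qed
qed

lemma ultrafilter_extends_proper_filter:
  assumes F: "proper_filter F"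
  obtains U where "is_ultrafilter U" "F \<subseteq> U"
proof -
  let ?\<F> = "{G. F \<subseteq> G \<and> proper_filter G}"
  have "\<exists>M\<in>?\<F>. \<forall>G\<in>?\<F>. M \<subseteq> G \<longrightarrow> G = M"
  proof (rule subset_Zorn_nonempty)
    fix \<C> assume "\<C> \<noteq> {}" and chain: "subset.chain ?\<F> \<C>"
    then have "proper_filter (\<Union>\<C>)"
      by (intro proper_filter_Union_chain) (auto simp: subset_chain_def)
    moreover have "F \<subseteq> \<Union>\<C>"
      using \<open>\<C> \<noteq> {}\<close> chain unfolding subset_chain_def by blast
    ultimately show "\<Union>\<C> \<in> ?\<F>" by simp
  qed (use F in blast)
  then obtain M where M: "F \<subseteq> M" "proper_filter M"
    and max: "\<And>G. F \<subseteq> G \<Longrightarrow> proper_filter G \<Longrightarrow> M \<subseteq> G \<Longrightarrow> G = M"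
    by auto
  \<comment> \<open>If neither A nor -A were in M, adjoining A would enlarge M.\<close>
  have "A \<in> M \<or> - A \<in> M" for A
  proof (rule ccontr)
    assume A: "\<not> (A \<in> M \<or> - A \<in> M)"
    have "F \<subseteq> {C. \<exists>D\<in>M. D \<inter> A \<subseteq> C}" "M \<subseteq> {C. \<exists>D\<in>M. D \<inter> A \<subseteq> C}"
      using M(1) by blast+
    then have "{C. \<exists>D\<in>M. D \<inter> A \<subseteq> C} = M"
      using A by (intro max proper_filter_refine[OF M(2)]) auto
    moreover have "A \<in> {C. \<exists>D\<in>M. D \<inter> A \<subseteq> C}"
      using proper_filterD(2)[OF M(2)] by blast
    ultimately show False using A by blast
  qed
  then have "is_ultrafilter M"
    using M(2) by (simp add: is_ultrafilter_iff)
  then show thesis using M(1) that by blast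
qed

section \<open>Closed subsets of beta M\<close>

text \<open>K is closed in the Stone topology iff it contains every ultrafilter all of whose basic
  neighbourhoods {q. A \<in> q}, A \<in> p, meet K.\<close>

definition beta_closed :: "'a set set set \<Rightarrow> bool" where
  "beta_closed K \<longleftrightarrow> (\<forall>p\<in>K. is_ultrafilter p) \<and>
     (\<forall>p. is_ultrafilter p \<and> (\<forall>A\<in>p. \<exists>q\<in>K. A \<in> q) \<longrightarrow> p \<in> K)"

lemma beta_closedI:
  assumes "\<And>p. p \<in> K \<Longrightarrow> is_ultrafilter p"
    and "\<And>p. is_ultrafilter p \<Longrightarrow> (\<And>A. A \<in> p \<Longrightarrow> \<exists>q\<in>K. A \<in> q) \<Longrightarrow> p \<in> K"
  shows "beta_closed K"
  using assms unfolding beta_closed_def by blast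

lemma beta_closed_ultrafilter: "beta_closed K \<Longrightarrow> p \<in> K \<Longrightarrow> is_ultrafilter p"
  unfolding beta_closed_def by blast

lemma beta_closed_closure:
  "beta_closed K \<Longrightarrow> is_ultrafilter p \<Longrightarrow> (\<And>A. A \<in> p \<Longrightarrow> \<exists>q\<in>K. A \<in> q) \<Longrightarrow> p \<in> K"
  unfolding beta_closed_def by blast

lemma beta_closed_Collect: "beta_closed {p. is_ultrafilter p \<and> \<C> \<subseteq> p}"
proof (rule beta_closedI)
  fix p assume p: "is_ultrafilter p"
    and near: "\<And>A. A \<in> p \<Longrightarrow> \<exists>q\<in>{p. is_ultrafilter p \<and> \<C> \<subseteq> p}. A \<in> q"
  have "C \<in> p" if "C \<in> \<C>" for C
  proof (rule ccontr)
    assume "C \<notin> p"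
    then obtain q where "is_ultrafilter q" "\<C> \<subseteq> q" "- C \<in> q"
      using near ultrafilter_Compl_iff[OF p] by blast
    then show False using that ultrafilter_Compl_iff by blast
  qed
  with p show "p \<in> {p. is_ultrafilter p \<and> \<C> \<subseteq> p}" by blast
qed simp

lemma beta_closed_singleton:
  assumes e: "is_ultrafilter e" shows "beta_closed {e}"
proof (rule beta_closedI)
  fix p assume "is_ultrafilter p" and "\<And>A. A \<in> p \<Longrightarrow> \<exists>q\<in>{e}. A \<in> q"
  then have "p = e" using e by (intro ultrafilter_subset_imp_eq) auto
  then show "p \<in> {e}" by simp
qed (use e in simp)

lemma beta_closed_Inter:
  assumes "\<K> \<noteq> {}" "\<And>K. K \<in> \<K> \<Longrightarrow> beta_closed K"
  shows "beta_closed (\<Inter>\<K>)"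
proof (rule beta_closedI)
  show "is_ultrafilter p" if "p \<in> \<Inter>\<K>" for p
    using that assms beta_closed_ultrafilter by blast
  show "p \<in> \<Inter>\<K>" if "is_ultrafilter p" "\<And>A. A \<in> p \<Longrightarrow> \<exists>q\<in>\<Inter>\<K>. A \<in> q" for p
    using that assms(2) beta_closed_closure by (metis InterD InterI)
qed

lemma beta_closed_Int:
  assumes "beta_closed K" "beta_closed L" shows "beta_closed (K \<inter> L)"
  using beta_closed_Inter[of "{K, L}"] assms by auto

lemma proper_filter_common_members:
  assumes "\<K> \<noteq> {}" and closed: "\<And>K. K \<in> \<K> \<Longrightarrow> beta_closed K"
    and nonempty: "\<And>K. K \<in> \<K> \<Longrightarrow> K \<noteq> {}"
    and directed: "\<And>K L. K \<in> \<K> \<Longrightarrow> L \<in> \<K> \<Longrightarrow> \<exists>N\<in>\<K>. N \<subseteq> K \<inter> L"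
  shows "proper_filter {A. \<exists>K\<in>\<K>. \<forall>q\<in>K. A \<in> q}" (is "proper_filter ?F")
proof (rule proper_filterI)
  have uf: "is_ultrafilter q" if "K \<in> \<K>" "q \<in> K" for K q
    using beta_closed_ultrafilter[OF closed] that by blast
  show "{} \<notin> ?F"
  proof
    assume "{} \<in> ?F"
    then obtain K where K: "K \<in> \<K>" "\<forall>q\<in>K. {} \<in> q" by blast
    then obtain q where "q \<in> K" using nonempty by blast
    with K show False using uf ultrafilterD(1) by metis
  qed
  obtain K where "K \<in> \<K>" using \<open>\<K> \<noteq> {}\<close> by blast
  then show "UNIV \<in> ?F" using uf ultrafilterD(2) by blast
  show "B \<in> ?F" if AB: "A \<in> ?F" "A \<subseteq> B" for A B
  proof -
    obtain K where K: "K \<in> \<K>" "\<forall>q\<in>K. A \<in> q" using AB(1) by blast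
    then have "\<forall>q\<in>K. B \<in> q" using AB(2) uf ultrafilterD(3) by metis
    with K(1) show ?thesis by blast
  qed
  show "A \<inter> B \<in> ?F" if AB: "A \<in> ?F" "B \<in> ?F" for A B
  proof -
    obtain K L where KL: "K \<in> \<K>" "L \<in> \<K>" "\<forall>q\<in>K. A \<in> q" "\<forall>q\<in>L. B \<in> q"
      using AB by blast
    obtain N where N: "N \<in> \<K>" "N \<subseteq> K \<inter> L" using directed[OF KL(1,2)] by blast
    have "\<forall>q\<in>N. A \<inter> B \<in> q" using KL N uf ultrafilterD(4) by (metis IntE subsetD)
    with N(1) show ?thesis by blast
  qed
qed

lemma beta_compact:
  assumes "\<K> \<noteq> {}" and closed: "\<And>K. K \<in> \<K> \<Longrightarrow> beta_closed K"
    and "\<And>K. K \<in> \<K> \<Longrightarrow> K \<noteq> {}"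
    and "\<And>K L. K \<in> \<K> \<Longrightarrow> L \<in> \<K> \<Longrightarrow> \<exists>N\<in>\<K>. N \<subseteq> K \<inter> L"
  obtains p where "\<And>K. K \<in> \<K> \<Longrightarrow> p \<in> K"
proof -
  obtain p where p: "is_ultrafilter p" "{A. \<exists>K\<in>\<K>. \<forall>q\<in>K. A \<in> q} \<subseteq> p"
    by (rule ultrafilter_extends_proper_filter[OF proper_filter_common_members[OF assms]])
  have "p \<in> K" if K: "K \<in> \<K>" for K
  proof (rule beta_closed_closure[OF closed[OF K] p(1)])
    fix A assume "A \<in> p"
    show "\<exists>q\<in>K. A \<in> q"
    proof (rule ccontr)
      assume "\<not> (\<exists>q\<in>K. A \<in> q)"
      then have "\<forall>q\<in>K. - A \<in> q"
        using ultrafilter_Compl_iff beta_closed_ultrafilter[OF closed[OF K]] by blast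
      then have "- A \<in> p" using p(2) K by blast
      then show False using \<open>A \<in> p\<close> ultrafilter_Compl_iff[OF p(1)] by blast
    qed
  qed
  then show thesis by (rule that)
qed

section \<open>The extended product\<close>

definition uf_mult_set :: "'a::semigroup_mult set set \<Rightarrow> 'a set \<Rightarrow> 'a set" where
  "uf_mult_set q A = {x. {y. x * y \<in> A} \<in> q}"

lemma mem_uf_mult_iff: "A \<in> uf_mult p q \<longleftrightarrow> uf_mult_set q A \<in> p"
  unfolding uf_mult_def uf_mult_set_def by simp

lemma uf_mult_set_Int:
  "is_ultrafilter q \<Longrightarrow> uf_mult_set q (A \<inter> B) = uf_mult_set q A \<inter> uf_mult_set q B"
  unfolding uf_mult_set_def using ultrafilter_Int_iff[of q "{y. _ * y \<in> A}" "{y. _ * y \<in> B}"]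
  by (auto simp: Int_def)

lemma uf_mult_set_Compl:
  "is_ultrafilter q \<Longrightarrow> uf_mult_set q (- A) = - uf_mult_set q A"
  unfolding uf_mult_set_def using ultrafilter_Compl_iff[of q "{y. _ * y \<in> A}"]
  by (auto simp: Compl_eq)

lemma uf_mult_set_UNIV: "is_ultrafilter q \<Longrightarrow> uf_mult_set q UNIV = UNIV"
  unfolding uf_mult_set_def using ultrafilterD(2) by auto

lemma is_ultrafilter_vimage_hom:
  assumes p: "is_ultrafilter p"
    and Int: "\<And>A B. h (A \<inter> B) = h A \<inter> h B" and Compl: "\<And>A. h (- A) = - h A"
    and UNIV: "h UNIV = UNIV"
  shows "is_ultrafilter {A. h A \<in> p}"
proof -
  have mono: "h A \<subseteq> h B" if "A \<subseteq> B" for A B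
    using Int[of A B] that by (metis Int_absorb2 inf.absorb_iff2 inf_commute)
  have "h {} = {}" using Compl[of UNIV] UNIV by simp
  then show ?thesis
    unfolding is_ultrafilter_def
    using ultrafilterD[OF p] mono Int Compl UNIV by (auto simp del: Compl_iff)
qed

lemma is_ultrafilter_uf_mult:
  assumes "is_ultrafilter p" "is_ultrafilter q"
  shows "is_ultrafilter (uf_mult p q)"
proof -
  have "uf_mult p q = {A. uf_mult_set q A \<in> p}"
    by (simp add: mem_uf_mult_iff set_eq_iff)
  then show ?thesis
    using is_ultrafilter_vimage_hom[OF assms(1) uf_mult_set_Int[OF assms(2)]
        uf_mult_set_Compl[OF assms(2)] uf_mult_set_UNIV[OF assms(2)]]
    by simp
qed

lemma uf_mult_assoc: "uf_mult (uf_mult p q) r = uf_mult p (uf_mult q r)"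
  unfolding uf_mult_def by (simp add: mult.assoc)

lemma beta_closed_vimage_uf_mult_right:
  assumes K: "beta_closed K" and e: "is_ultrafilter e"
  shows "beta_closed {q. is_ultrafilter q \<and> uf_mult q e \<in> K}"
proof (rule beta_closedI)
  fix p assume p: "is_ultrafilter p"
    and near: "\<And>A. A \<in> p \<Longrightarrow> \<exists>q\<in>{q. is_ultrafilter q \<and> uf_mult q e \<in> K}. A \<in> q"
  have "uf_mult p e \<in> K"
  proof (rule beta_closed_closure[OF K is_ultrafilter_uf_mult[OF p e]])
    fix B assume "B \<in> uf_mult p e"
    then obtain q where "uf_mult q e \<in> K" "uf_mult_set e B \<in> q"
      using near unfolding mem_uf_mult_iff by blast
    moreover from this(2) have "B \<in> uf_mult q e" by (simp add: mem_uf_mult_iff)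
    ultimately show "\<exists>r\<in>K. B \<in> r" by blast
  qed
  with p show "p \<in> {q. is_ultrafilter q \<and> uf_mult q e \<in> K}" by blast
qed blast

lemma beta_closed_image_uf_mult_right:
  assumes K: "beta_closed K" and e: "is_ultrafilter e"
  shows "beta_closed ((\<lambda>q. uf_mult q e) ` K)"
proof (rule beta_closedI)
  have uf: "is_ultrafilter q" if "q \<in> K" for q
    using beta_closed_ultrafilter[OF K that] .
  show "is_ultrafilter r" if "r \<in> (\<lambda>q. uf_mult q e) ` K" for r
    using that uf is_ultrafilter_uf_mult[OF _ e] by blast
  fix p assume p: "is_ultrafilter p"
    and near: "\<And>A. A \<in> p \<Longrightarrow> \<exists>r\<in>(\<lambda>q. uf_mult q e) ` K. A \<in> r"
  \<comment> \<open>K' A consists of the q \<in> K with A \<in> q e; compactness gives one q in all of them.\<close>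
  define K' where "K' A = K \<inter> {q. is_ultrafilter q \<and> {uf_mult_set e A} \<subseteq> q}" for A
  obtain q where q: "\<And>L. L \<in> K' ` p \<Longrightarrow> q \<in> L"
  proof (rule beta_compact)
    show "K' ` p \<noteq> {}" using ultrafilterD(2)[OF p] by blast
    show "beta_closed L" if "L \<in> K' ` p" for L
      using that beta_closed_Int[OF K beta_closed_Collect] unfolding K'_def by blast
    show "L \<noteq> {}" if "L \<in> K' ` p" for L
    proof -
      obtain A where "A \<in> p" "L = K' A" using \<open>L \<in> K' ` p\<close> by blast
      moreover obtain q where "q \<in> K" "A \<in> uf_mult q e"
        using near[OF \<open>A \<in> p\<close>] by blast
      ultimately have "q \<in> L" using uf unfolding K'_def mem_uf_mult_iff by blast
      then show ?thesis by blast
    qed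
    show "\<exists>N\<in>K' ` p. N \<subseteq> L \<inter> L'" if "L \<in> K' ` p" "L' \<in> K' ` p" for L L'
    proof -
      obtain A A' where "A \<in> p" "A' \<in> p" "L = K' A" "L' = K' A'"
        using \<open>L \<in> K' ` p\<close> \<open>L' \<in> K' ` p\<close> by blast
      moreover have "K' (A \<inter> A') \<subseteq> K' A \<inter> K' A'"
        unfolding K'_def by (auto simp: uf_mult_set_Int[OF e] ultrafilter_Int_iff)
      moreover have "A \<inter> A' \<in> p" using calculation ultrafilterD(4)[OF p] by blast
      ultimately show ?thesis by blast
    qed
  qed (rule that)
  have "q \<in> K" using q[of "K' UNIV"] ultrafilterD(2)[OF p] unfolding K'_def by blast
  moreover have "p \<subseteq> uf_mult q e"
  proof
    fix A assume "A \<in> p"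
    then have "q \<in> K' A" using q by blast
    then show "A \<in> uf_mult q e" unfolding K'_def mem_uf_mult_iff by blast
  qed
  ultimately have "p = uf_mult q e"
    using ultrafilter_subset_imp_eq[OF p is_ultrafilter_uf_mult[OF uf e]] by blast
  with \<open>q \<in> K\<close> show "p \<in> (\<lambda>q. uf_mult q e) ` K" by blast
qed

section \<open>Idempotent ultrafilters\<close>

lemma subset_Zorn_minimal:
  assumes "\<A> \<noteq> {}" and chain: "\<And>\<C>. \<C> \<noteq> {} \<Longrightarrow> subset.chain \<A> \<C> \<Longrightarrow> \<Inter>\<C> \<in> \<A>"
  shows "\<exists>M\<in>\<A>. \<forall>X\<in>\<A>. X \<subseteq> M \<longrightarrow> X = M"
proof -
  have "\<exists>M\<in>uminus ` \<A>. \<forall>X\<in>uminus ` \<A>. M \<subseteq> X \<longrightarrow> X = M"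
  proof (rule subset_Zorn_nonempty)
    fix \<C> assume "\<C> \<noteq> {}" and \<C>: "subset.chain (uminus ` \<A>) \<C>"
    have "subset.chain \<A> (uminus ` \<C>)"
      using \<C> unfolding subset_chain_def by (force simp: image_iff)
    with \<open>\<C> \<noteq> {}\<close> have "\<Inter>(uminus ` \<C>) \<in> \<A>" by (intro chain) auto
    then have "- \<Inter>(uminus ` \<C>) \<in> uminus ` \<A>" by (rule imageI)
    moreover have "- \<Inter>(uminus ` \<C>) = \<Union>\<C>" by simp
    ultimately show "\<Union>\<C> \<in> uminus ` \<A>" by simp
  qed (use assms(1) in simp)
  then show ?thesis by simp
qed

definition uf_mult_closed :: "'a::semigroup_mult set set set \<Rightarrow> bool" where
  "uf_mult_closed K \<longleftrightarrow> (\<forall>p\<in>K. \<forall>q\<in>K. uf_mult p q \<in> K)"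

definition closed_subsemigroup :: "'a::semigroup_mult set set set \<Rightarrow> bool" where
  "closed_subsemigroup K \<longleftrightarrow> K \<noteq> {} \<and> beta_closed K \<and> uf_mult_closed K"

lemma closed_subsemigroup_Inter_chain:
  assumes "\<C> \<noteq> {}" and chain: "subset.chain {K. closed_subsemigroup K} \<C>"
  shows "closed_subsemigroup (\<Inter>\<C>)"
proof -
  have members: "\<And>K. K \<in> \<C> \<Longrightarrow> K \<noteq> {} \<and> beta_closed K \<and> uf_mult_closed K"
    and total: "\<And>K L. K \<in> \<C> \<Longrightarrow> L \<in> \<C> \<Longrightarrow> K \<subseteq> L \<or> L \<subseteq> K"
    using chain unfolding subset_chain_def closed_subsemigroup_def by blast+
  have directed: "\<exists>N\<in>\<C>. N \<subseteq> K \<inter> L" if "K \<in> \<C>" "L \<in> \<C>" for K L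
    using total[OF that] that by (metis Int_absorb1 Int_absorb2 order_refl)
  obtain p where "\<And>K. K \<in> \<C> \<Longrightarrow> p \<in> K"
    using beta_compact[OF assms(1)] members directed by metis
  then have "\<Inter>\<C> \<noteq> {}" by blast
  moreover have "beta_closed (\<Inter>\<C>)" using beta_closed_Inter[OF assms(1)] members by blast
  moreover have "uf_mult_closed (\<Inter>\<C>)"
    using members unfolding uf_mult_closed_def by blast
  ultimately show ?thesis unfolding closed_subsemigroup_def by blast
qed

lemma minimal_closed_subsemigroup_exists:
  assumes "closed_subsemigroup S"
  obtains T where "T \<subseteq> S" "closed_subsemigroup T"
    "\<And>K. K \<subseteq> T \<Longrightarrow> closed_subsemigroup K \<Longrightarrow> K = T"
proof -
  have "\<exists>T\<in>{K. K \<subseteq> S \<and> closed_subsemigroup K}.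
      \<forall>K\<in>{K. K \<subseteq> S \<and> closed_subsemigroup K}. K \<subseteq> T \<longrightarrow> K = T"
  proof (rule subset_Zorn_minimal)
    fix \<C> assume "\<C> \<noteq> {}" and chain: "subset.chain {K. K \<subseteq> S \<and> closed_subsemigroup K} \<C>"
    then have "closed_subsemigroup (\<Inter>\<C>)"
      by (intro closed_subsemigroup_Inter_chain) (auto simp: subset_chain_def)
    moreover have "\<Inter>\<C> \<subseteq> S" using \<open>\<C> \<noteq> {}\<close> chain unfolding subset_chain_def by blast
    ultimately show "\<Inter>\<C> \<in> {K. K \<subseteq> S \<and> closed_subsemigroup K}" by blast
  qed (use assms in blast)
  then show thesis using that by auto
qed

lemma closed_subsemigroupD:
  assumes "closed_subsemigroup K"
  shows "K \<noteq> {}" "beta_closed K" "p \<in> K \<Longrightarrow> q \<in> K \<Longrightarrow> uf_mult p q \<in> K"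
  using assms unfolding closed_subsemigroup_def uf_mult_closed_def by blast+

text \<open>The Ellis-Numakura lemma. For a minimal closed subsemigroup T and e \<in> T, minimality
  forces first T e = T and then the right stabiliser of e to be all of T.\<close>

lemma idempotent_ultrafilter_exists:
  assumes "closed_subsemigroup S"
  obtains e where "e \<in> S" "uf_mult e e = e"
proof -
  obtain T where "T \<subseteq> S" and T: "closed_subsemigroup T"
    and minimal: "\<And>K. K \<subseteq> T \<Longrightarrow> closed_subsemigroup K \<Longrightarrow> K = T"
    using minimal_closed_subsemigroup_exists[OF assms] by blast
  note mult = closed_subsemigroupD(3)[OF T]
  obtain e where "e \<in> T" using closed_subsemigroupD(1)[OF T] by blast
  have e: "is_ultrafilter e" using beta_closed_ultrafilter[OF closed_subsemigroupD(2)[OF T] \<open>e \<in> T\<close>] .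
  have "closed_subsemigroup ((\<lambda>q. uf_mult q e) ` T)"
    unfolding closed_subsemigroup_def uf_mult_closed_def
  proof (intro conjI ballI)
    show "(\<lambda>q. uf_mult q e) ` T \<noteq> {}" using \<open>e \<in> T\<close> by blast
    show "beta_closed ((\<lambda>q. uf_mult q e) ` T)"
      by (rule beta_closed_image_uf_mult_right[OF closed_subsemigroupD(2)[OF T] e])
    fix p p' assume "p \<in> (\<lambda>q. uf_mult q e) ` T" "p' \<in> (\<lambda>q. uf_mult q e) ` T"
    then obtain q q' where "q \<in> T" "q' \<in> T" "p = uf_mult q e" "p' = uf_mult q' e" by blast
    then have "uf_mult p p' = uf_mult (uf_mult q (uf_mult e q')) e"
      and "uf_mult q (uf_mult e q') \<in> T"
      using mult \<open>e \<in> T\<close> by (simp_all add: uf_mult_assoc)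
    then show "uf_mult p p' \<in> (\<lambda>q. uf_mult q e) ` T" by blast
  qed
  moreover have "(\<lambda>q. uf_mult q e) ` T \<subseteq> T" using mult \<open>e \<in> T\<close> by blast
  ultimately have "(\<lambda>q. uf_mult q e) ` T = T" by (rule minimal[rotated])
  then have "e \<in> (\<lambda>q. uf_mult q e) ` T" using \<open>e \<in> T\<close> by simp
  then obtain q0 where "q0 \<in> T" "uf_mult q0 e = e" by auto
  define V where "V = T \<inter> {q. is_ultrafilter q \<and> uf_mult q e \<in> {e}}"
  have "closed_subsemigroup V"
    unfolding closed_subsemigroup_def uf_mult_closed_def
  proof (intro conjI ballI)
    show "V \<noteq> {}" using \<open>q0 \<in> T\<close> \<open>uf_mult q0 e = e\<close> beta_closed_ultrafilter[OF closed_subsemigroupD(2)[OF T]]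
      unfolding V_def by blast
    show "beta_closed V" unfolding V_def
      by (intro beta_closed_Int closed_subsemigroupD(2)[OF T] beta_closed_vimage_uf_mult_right
          beta_closed_singleton e)
    fix p p' assume "p \<in> V" "p' \<in> V"
    then show "uf_mult p p' \<in> V" unfolding V_def
      using mult is_ultrafilter_uf_mult by (auto simp: uf_mult_assoc)
  qed
  then have "V = T" using minimal unfolding V_def by blast
  then have "uf_mult e e = e" using \<open>e \<in> T\<close> unfolding V_def by blast
  with \<open>e \<in> T\<close> \<open>T \<subseteq> S\<close> show thesis using that by blast
qed

section \<open>The Galvin-Glazer theorem\<close>

lemma ordprod_Cons: "ks \<noteq> [] \<Longrightarrow> ordprod x (i # ks) = x i * ordprod x ks"
  by (cases ks) auto

lemma ordprod_append:
  "ks \<noteq> [] \<Longrightarrow> js \<noteq> [] \<Longrightarrow> ordprod x (ks @ js) = ordprod x ks * ordprod x js"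
proof (induction ks)
  case (Cons i ks)
  then show ?case by (cases "ks = []") (simp_all add: ordprod_Cons mult.assoc)
qed simp

definition uf_star :: "'a::semigroup_mult set set \<Rightarrow> 'a set \<Rightarrow> 'a set" where
  "uf_star p B = B \<inter> uf_mult_set p B"

text \<open>Removing the chosen point x is what makes the resulting sequence injective.\<close>

definition galvin_glazer_step :: "'a::semigroup_mult set set \<Rightarrow> 'a set \<Rightarrow> 'a set" where
  "galvin_glazer_step p B = (let x = SOME x. x \<in> B in uf_star p (B \<inter> {y. x * y \<in> B} - {x}))"

definition galvin_glazer_set :: "'a::semigroup_mult set set \<Rightarrow> 'a set \<Rightarrow> nat \<Rightarrow> 'a set" where
  "galvin_glazer_set p A n = (galvin_glazer_step p ^^ n) (uf_star p A)"

definition galvin_glazer_seq :: "'a::semigroup_mult set set \<Rightarrow> 'a set \<Rightarrow> nat \<Rightarrow> 'a" where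
  "galvin_glazer_seq p A n = (SOME x. x \<in> galvin_glazer_set p A n)"

lemma uf_star_subset: "uf_star p B \<subseteq> B"
  unfolding uf_star_def by blast

lemma galvin_glazer_set_Suc:
  "galvin_glazer_set p A (Suc n) =
     uf_star p (galvin_glazer_set p A n \<inter> {y. galvin_glazer_seq p A n * y \<in> galvin_glazer_set p A n}
       - {galvin_glazer_seq p A n})"
  unfolding galvin_glazer_set_def galvin_glazer_step_def galvin_glazer_seq_def by (simp add: Let_def)

lemma galvin_glazer_set_Suc_subset:
  "galvin_glazer_set p A (Suc n) \<subseteq>
     galvin_glazer_set p A n \<inter> {y. galvin_glazer_seq p A n * y \<in> galvin_glazer_set p A n}
       - {galvin_glazer_seq p A n}"
  unfolding galvin_glazer_set_Suc by (rule uf_star_subset)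

lemma galvin_glazer_set_antimono: "m \<le> n \<Longrightarrow> galvin_glazer_set p A n \<subseteq> galvin_glazer_set p A m"
  using lift_Suc_antimono_le[of "galvin_glazer_set p A"] galvin_glazer_set_Suc_subset by blast

lemma uf_star_mem:
  assumes p: "is_ultrafilter p" and idem: "uf_mult p p = p"
  shows "B \<in> p \<Longrightarrow> uf_star p B \<in> p"
  unfolding uf_star_def using idem mem_uf_mult_iff[of B p p] ultrafilterD(4)[OF p] by simp

lemma uf_star_translate_mem:
  assumes p: "is_ultrafilter p" and idem: "uf_mult p p = p"
    and "B \<in> p" "x \<in> uf_star p B"
  shows "{y. x * y \<in> uf_star p B} \<in> p"
proof -
  have "{y. x * y \<in> B} \<in> p" using assms(4) unfolding uf_star_def uf_mult_set_def by blast
  then have "uf_star p {y. x * y \<in> B} \<in> p" by (rule uf_star_mem[OF p idem])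
  moreover have "uf_star p {y. x * y \<in> B} \<subseteq> {y. x * y \<in> uf_star p B}"
    unfolding uf_star_def uf_mult_set_def by (auto simp: mult.assoc)
  ultimately show ?thesis using ultrafilterD(3)[OF p] by blast
qed

context
  fixes p :: "'a::semigroup_mult set set"
  assumes p: "is_ultrafilter p" and idem: "uf_mult p p = p" and free: "\<And>a. - {a} \<in> p"
begin

lemma galvin_glazer_set_star:
  assumes "A \<in> p" shows "\<exists>C\<in>p. galvin_glazer_set p A n = uf_star p C"
proof (induction n)
  case 0
  show ?case using assms unfolding galvin_glazer_set_def by auto
next
  case (Suc n)
  let ?B = "galvin_glazer_set p A n" and ?x = "galvin_glazer_seq p A n"
  obtain C where "C \<in> p" and C: "?B = uf_star p C" using Suc.IH by blast
  then have "?B \<in> p" using uf_star_mem[OF p idem] by simp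
  then have "?B \<noteq> {}" using ultrafilterD(1)[OF p] by auto
  then have "?x \<in> ?B" unfolding galvin_glazer_seq_def by (rule some_in_eq[THEN iffD2])
  then have "{y. ?x * y \<in> ?B} \<in> p" using uf_star_translate_mem[OF p idem \<open>C \<in> p\<close>] C by simp
  then have "?B \<inter> {y. ?x * y \<in> ?B} - {?x} \<in> p"
    using \<open>?B \<in> p\<close> free ultrafilterD(4)[OF p] by (simp add: Diff_eq)
  then show ?case unfolding galvin_glazer_set_Suc by blast
qed

lemma galvin_glazer_set_mem: "A \<in> p \<Longrightarrow> galvin_glazer_set p A n \<in> p"
  using galvin_glazer_set_star uf_star_mem[OF p idem] by metis

lemma galvin_glazer_seq_mem: "A \<in> p \<Longrightarrow> galvin_glazer_seq p A n \<in> galvin_glazer_set p A n"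
  using galvin_glazer_set_mem ultrafilterD(1)[OF p] unfolding galvin_glazer_seq_def
  by (metis some_in_eq)

lemma inj_galvin_glazer_seq:
  assumes "A \<in> p" shows "inj (galvin_glazer_seq p A)"
proof -
  have neq: "galvin_glazer_seq p A m \<noteq> galvin_glazer_seq p A n" if "m < n" for m n
  proof -
    have "galvin_glazer_set p A n \<subseteq> galvin_glazer_set p A (Suc m)"
      using \<open>m < n\<close> by (intro galvin_glazer_set_antimono) simp
    then have "galvin_glazer_seq p A n \<in> galvin_glazer_set p A (Suc m)"
      using galvin_glazer_seq_mem[OF assms] by blast
    then show ?thesis using galvin_glazer_set_Suc_subset[of p A m] by auto
  qed
  show ?thesis
  proof (rule injI)
    fix m n assume "galvin_glazer_seq p A m = galvin_glazer_seq p A n"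
    then show "m = n" using neq[of m n] neq[of n m] by (cases m n rule: linorder_cases) auto
  qed
qed

lemma ordprod_galvin_glazer_seq_mem:
  assumes "A \<in> p"
  shows "ks \<noteq> [] \<Longrightarrow> sorted_wrt (<) ks \<Longrightarrow> \<forall>i\<in>set ks. n \<le> i \<Longrightarrow>
    ordprod (galvin_glazer_seq p A) ks \<in> galvin_glazer_set p A n"
proof (induction ks arbitrary: n)
  case (Cons i ks)
  then have "n \<le> i" by simp
  show ?case
  proof (cases "ks = []")
    case True
    then show ?thesis
      using galvin_glazer_seq_mem[OF assms] galvin_glazer_set_antimono[OF \<open>n \<le> i\<close>] by auto
  next
    case False
    with Cons have "ordprod (galvin_glazer_seq p A) ks \<in> galvin_glazer_set p A (Suc i)"
      by (simp add: Suc_le_eq)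
    then have "ordprod (galvin_glazer_seq p A) (i # ks) \<in> galvin_glazer_set p A i"
      using galvin_glazer_set_Suc_subset[of p A i] by (auto simp: ordprod_Cons[OF False])
    then show ?thesis using galvin_glazer_set_antimono[OF \<open>n \<le> i\<close>] by blast
  qed
qed simp

theorem DIP_if_mem_idempotent_free_ultrafilter:
  assumes "A \<in> p" shows "DIP A"
  unfolding DIP_def
proof (intro exI conjI)
  show "inj (galvin_glazer_seq p A)" using inj_galvin_glazer_seq[OF assms] .
  have "FP (galvin_glazer_seq p A) \<subseteq> galvin_glazer_set p A 0"
    unfolding FP_def using ordprod_galvin_glazer_seq_mem[OF assms] by blast
  also have "\<dots> \<subseteq> A" unfolding galvin_glazer_set_def by (simp add: uf_star_subset)
  finally show "FP (galvin_glazer_seq p A) \<subseteq> A" .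
qed

end

section \<open>Free ultrafilters containing the tails of FP\<close>

definition FP_from :: "(nat \<Rightarrow> 'a::semigroup_mult) \<Rightarrow> nat \<Rightarrow> 'a set" where
  "FP_from x m = {ordprod x is | is. is \<noteq> [] \<and> sorted_wrt (<) is \<and> (\<forall>i\<in>set is. m \<le> i)}"

lemma FP_from_0: "FP_from x 0 = FP x"
  unfolding FP_from_def FP_def by simp

lemma FP_from_antimono: "m \<le> n \<Longrightarrow> FP_from x n \<subseteq> FP_from x m"
  unfolding FP_from_def by fastforce

lemma mem_FP_from: "m \<le> i \<Longrightarrow> x i \<in> FP_from x m"
  unfolding FP_from_def by (intro CollectI exI[of _ "[i]"]) simp

lemma infinite_FP_from:
  assumes "inj x" shows "infinite (FP_from x m)"
proof
  assume "finite (FP_from x m)"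
  moreover have "x ` {m..} \<subseteq> FP_from x m" using mem_FP_from by auto
  ultimately have "finite (x ` {m..})" by (rule finite_subset[rotated])
  then have "finite {m..}" using finite_imageD inj_on_subset[OF assms] by blast
  then show False using infinite_Ici by blast
qed

lemma FP_from_mult:
  assumes "a \<in> FP_from x m"
  shows "\<exists>k. \<forall>b\<in>FP_from x k. a * b \<in> FP_from x m"
proof -
  obtain ks where ks: "a = ordprod x ks" "ks \<noteq> []" "sorted_wrt (<) ks" "\<forall>i\<in>set ks. m \<le> i"
    using assms unfolding FP_from_def by blast
  have "a * b \<in> FP_from x m" if b: "b \<in> FP_from x (Suc (Max (set ks)))" for b
  proof -
    obtain js where js: "b = ordprod x js" "js \<noteq> []" "sorted_wrt (<) js"
      "\<forall>j\<in>set js. Suc (Max (set ks)) \<le> j"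
      using b unfolding FP_from_def by blast
    have "\<forall>i\<in>set ks. \<forall>j\<in>set js. i < j"
      using js(4) by (meson List.finite_set Max_ge less_eq_Suc_le order_le_less_trans)
    then have "sorted_wrt (<) (ks @ js)" using ks(3) js(3) by (simp add: sorted_wrt_append)
    moreover have "\<forall>i\<in>set (ks @ js). m \<le> i"
      using ks(2,4) js(4) by (metis Max_in List.finite_set Suc_leD le_trans set_empty Un_iff set_append)
    moreover have "a * b = ordprod x (ks @ js)" using ks(1,2) js(1,2) by (simp add: ordprod_append)
    ultimately show ?thesis unfolding FP_from_def using ks(2) by blast
  qed
  then show ?thesis by blast
qed

lemma free_ultrafilter_containing_decseq:
  fixes A :: "nat \<Rightarrow> 'a set"
  assumes inf: "\<And>m. infinite (A m)" and dec: "\<And>m n. m \<le> n \<Longrightarrow> A n \<subseteq> A m"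
  obtains p where "is_ultrafilter p" "\<And>a. - {a} \<in> p" "\<And>m. A m \<in> p"
proof -
  let ?F = "{C. \<exists>m F. finite F \<and> A m - F \<subseteq> C}"
  have "proper_filter ?F"
  proof (rule proper_filterI)
    show "{} \<notin> ?F"
    proof
      assume "{} \<in> ?F"
      then obtain m F where "finite F" "A m \<subseteq> F" by blast
      then show False using inf finite_subset by blast
    qed
    show "UNIV \<in> ?F" by blast
    show "C \<in> ?F" if "B \<in> ?F" "B \<subseteq> C" for B C
      using that by (auto intro: order_trans)
    show "B \<inter> C \<in> ?F" if BC: "B \<in> ?F" "C \<in> ?F" for B C
    proof -
      obtain m F n G where "finite F" "A m - F \<subseteq> B" "finite G" "A n - G \<subseteq> C"
        using BC by blast
      moreover have "A (max m n) \<subseteq> A m" "A (max m n) \<subseteq> A n"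
        by (simp_all add: dec)
      ultimately have "finite (F \<union> G)" "A (max m n) - (F \<union> G) \<subseteq> B \<inter> C" by auto
      then show ?thesis by blast
    qed
  qed
  then obtain p where p: "is_ultrafilter p" "?F \<subseteq> p" by (rule ultrafilter_extends_proper_filter)
  have "- {a} \<in> ?F" for a by (intro CollectI exI[of _ 0] exI[of _ "{a}"]) auto
  moreover have "A m \<in> ?F" for m by (intro CollectI exI[of _ m] exI[of _ "{}"]) auto
  ultimately show thesis using that p by blast
qed

lemma FP_from_mem_uf_mult:
  assumes p: "is_ultrafilter p" and q: "is_ultrafilter q"
    and "FP_from x m \<in> p" and tails: "\<And>k. FP_from x k \<in> q"
  shows "FP_from x m \<in> uf_mult p q"
proof -
  have "FP_from x m \<subseteq> uf_mult_set q (FP_from x m)"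
  proof
    fix a assume "a \<in> FP_from x m"
    then obtain k where "\<forall>b\<in>FP_from x k. a * b \<in> FP_from x m" using FP_from_mult by blast
    then have "FP_from x k \<subseteq> {b. a * b \<in> FP_from x m}" by blast
    then show "a \<in> uf_mult_set q (FP_from x m)"
      unfolding uf_mult_set_def using tails ultrafilterD(3)[OF q] by blast
  qed
  then show ?thesis
    unfolding mem_uf_mult_iff using \<open>FP_from x m \<in> p\<close> ultrafilterD(3)[OF p] by blast
qed

lemma closed_subsemigroup_free_FP_tails:
  fixes x :: "nat \<Rightarrow> 'a::semigroup_mult"
  assumes moving: "moving TYPE('a)" and "inj x"
  shows "closed_subsemigroup {p. is_ultrafilter p \<and> range (\<lambda>a. - {a}) \<union> range (FP_from x) \<subseteq> p}"
    (is "closed_subsemigroup ?S")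
  unfolding closed_subsemigroup_def uf_mult_closed_def
proof (intro conjI ballI)
  obtain p where "is_ultrafilter p" "\<And>a. - {a} \<in> p" "\<And>m. FP_from x m \<in> p"
    using free_ultrafilter_containing_decseq[of "FP_from x"] infinite_FP_from[OF \<open>inj x\<close>]
      FP_from_antimono by metis
  then have "p \<in> ?S" by blast
  then show "?S \<noteq> {}" by blast
  show "beta_closed ?S" by (rule beta_closed_Collect)
  fix p q assume "p \<in> ?S" "q \<in> ?S"
  then have p: "is_ultrafilter p" "\<And>a. - {a} \<in> p" "\<And>m. FP_from x m \<in> p"
    and q: "is_ultrafilter q" "\<And>a. - {a} \<in> q" "\<And>m. FP_from x m \<in> q"
    by blast+
  have pq: "is_ultrafilter (uf_mult p q)" using is_ultrafilter_uf_mult[OF p(1) q(1)] .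
  have "\<not> is_principal (uf_mult p q)"
    using moving p q not_principal_ultrafilter_iff unfolding moving_def by blast
  then have "- {a} \<in> uf_mult p q" for a using not_principal_ultrafilter_iff[OF pq] by blast
  moreover have "FP_from x m \<in> uf_mult p q" for m
    using FP_from_mem_uf_mult[OF p(1) q(1) p(3) q(3)] .
  ultimately show "uf_mult p q \<in> ?S" using pq by blast
qed

theorem mainTheorem3:
  fixes X Y :: "'a::semigroup_mult set"
  assumes "moving TYPE('a)"
    and "DIP X"
    and "Y \<subseteq> X"
  shows "DIP Y \<or> DIP (X - Y)"
proof -
  obtain x :: "nat \<Rightarrow> 'a" where "inj x" "FP x \<subseteq> X" using \<open>DIP X\<close> unfolding DIP_def by blast
  obtain e where "e \<in> {p. is_ultrafilter p \<and> range (\<lambda>a. - {a}) \<union> range (FP_from x) \<subseteq> p}"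
    and idem: "uf_mult e e = e"
    using closed_subsemigroup_free_FP_tails[OF \<open>moving TYPE('a)\<close> \<open>inj x\<close>]
    by (rule idempotent_ultrafilter_exists)
  then have e: "is_ultrafilter e" and free: "\<And>a. - {a} \<in> e" and "FP_from x 0 \<in> e"
    by auto
  then have "X \<in> e" using \<open>FP x \<subseteq> X\<close> FP_from_0 ultrafilterD(3) by metis
  then have "Y \<in> e \<or> X - Y \<in> e" using e by (metis Diff_eq ultrafilterD(4,5))
  then show ?thesis using DIP_if_mem_idempotent_free_ultrafilter[OF e idem free] by blast
qed

end
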